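(* If a $C_{p^rq^s}$-transfer system has three or more connected components, then it is not lesser simply paired.
   Context: $p,q$ are distinct primes and $r,s\ge 0$ integers. The subgroups of $C_{p^rq^s}$ are identified with grid points $(i,j)$, $0\le i\le r$, $0\le j\le s$, where $(i,j)$ stands for $C_{p^iq^j}$ (intersection is coordinatewise minimum). A $C_{p^rq^s}$-transfer system is a partial order $\to$ on these vertices such that: $(i_1,j_1)\to(i_2,j_2)$ implies $i_1\le i_2$, $j_1\le j_2$; it is reflexive and transitive; and $(i_1,j_1)\to(i_2,j_2)$ implies $(\min\{i_1,a\},\min\{j_1,b\})\to(\min\{i_2,a\},\min\{j_2,b\})$ for every vertex $(a,b)$. Connected components are those of the underlying undirected graph. A transfer system is saturated if whenever $L\le K\le H$ and $L\to H$ is in it then $K\to H$ is in it; $\mathrm{Hull}(T)$ is the smallest saturated transfer system containing $T$; $T_c$ is the complete transfer system (all $K\to H$ with $K\le H$). A pair $(T,T')$ is compatible if $T\subseteq T'$ and for all subgroups $A,B,C$ with $B,C\le A$: if $B\to A$ is in $T$ and $B\cap C\to B$ is in $T'$ then $C\to A$ is in $T'$. $T$ is lesser simply paired if for every transfer system $T'\supseteq T$, $(T,T')$ is compatible iff $T'\in\{\mathrm{Hull}(T),T_c\}$. *)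

theory Defs
  imports Main "HOL-Computational_Algebra.Primes"
begin

text \<open>Subgroups of C_{p^r q^s} are identified with grid points (i,j), 0<=i<=r, 0<=j<=s.
 A transfer system is represented as the set of pairs (K,H) with K -> H.\<close>

type_synonym vtx = "nat \<times> nat"

definition grid :: "nat \<Rightarrow> nat \<Rightarrow> vtx set" where
  "grid r s = {0..r} \<times> {0..s}"

definition le_v :: "vtx \<Rightarrow> vtx \<Rightarrow> bool" where
  "le_v x y \<longleftrightarrow> fst x \<le> fst y \<and> snd x \<le> snd y"

definition meet_v :: "vtx \<Rightarrow> vtx \<Rightarrow> vtx" where
  "meet_v x y = (min (fst x) (fst y), min (snd x) (snd y))"

definition transfer_system :: "nat \<Rightarrow> nat \<Rightarrow> vtx rel \<Rightarrow> bool" where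
  "transfer_system r s T \<longleftrightarrow>
     T \<subseteq> grid r s \<times> grid r s \<and>
     (\<forall>(x,y)\<in>T. le_v x y) \<and>
     (\<forall>x\<in>grid r s. (x,x) \<in> T) \<and>
     trans T \<and>
     (\<forall>(x,y)\<in>T. \<forall>z\<in>grid r s. (meet_v x z, meet_v y z) \<in> T)"

definition saturated :: "nat \<Rightarrow> nat \<Rightarrow> vtx rel \<Rightarrow> bool" where
  "saturated r s T \<longleftrightarrow>
     (\<forall>L\<in>grid r s. \<forall>K\<in>grid r s. \<forall>H\<in>grid r s.
        le_v L K \<and> le_v K H \<and> (L,H) \<in> T \<longrightarrow> (K,H) \<in> T)"

definition Hull :: "nat \<Rightarrow> nat \<Rightarrow> vtx rel \<Rightarrow> vtx rel" where
  "Hull r s T = \<Inter> {T'. transfer_system r s T' \<and> saturated r s T' \<and> T \<subseteq> T'}"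

definition complete_ts :: "nat \<Rightarrow> nat \<Rightarrow> vtx rel" where
  "complete_ts r s = {(K,H). K \<in> grid r s \<and> H \<in> grid r s \<and> le_v K H}"

definition compatible :: "nat \<Rightarrow> nat \<Rightarrow> vtx rel \<Rightarrow> vtx rel \<Rightarrow> bool" where
  "compatible r s T T' \<longleftrightarrow> T \<subseteq> T' \<and>
     (\<forall>A\<in>grid r s. \<forall>B\<in>grid r s. \<forall>C\<in>grid r s.
        le_v B A \<and> le_v C A \<and> (B,A) \<in> T \<and> (meet_v B C, B) \<in> T' \<longrightarrow> (C,A) \<in> T')"

definition lesser_simply_paired :: "nat \<Rightarrow> nat \<Rightarrow> vtx rel \<Rightarrow> bool" where
  "lesser_simply_paired r s T \<longleftrightarrow>
     (\<forall>T'. transfer_system r s T' \<and> T \<subseteq> T' \<longrightarrow>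
        (compatible r s T T' \<longleftrightarrow> (T' = Hull r s T \<or> T' = complete_ts r s)))"

definition components :: "nat \<Rightarrow> nat \<Rightarrow> vtx rel \<Rightarrow> vtx set set" where
  "components r s T = grid r s // ((T \<union> T\<inverse>)\<^sup>*)"

end

theory Submission
  imports Defs
begin

text \<open>For a vertex \<open>v\<close>, let \<open>S\<^sub>v\<close> consist of all \<open>K \<le> H\<close> except those entering the
  up-set of \<open>v\<close> from outside (\<open>v \<le> H\<close> but not \<open>v \<le> K\<close>). Each \<open>S\<^sub>v\<close> is a saturated
  transfer system, hence compatible with every \<open>T \<subseteq> S\<^sub>v\<close>, and \<open>T \<subseteq> S\<^sub>v\<close> holds as soon
  as nothing transfers into \<open>v\<close> in \<open>T\<close>. Every component contains such a source (a vertex of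
  least height), so with three components there are two distinct nontrivial sources \<open>v\<close>,
  \<open>w\<close>. Then \<open>S\<^sub>v \<noteq> S\<^sub>w\<close> and neither is complete, so they cannot both be \<open>Hull T\<close>.\<close>

definition upset_blocking_ts :: "nat \<Rightarrow> nat \<Rightarrow> vtx \<Rightarrow> vtx rel" where
  "upset_blocking_ts r s v =
     {(K,H). K \<in> grid r s \<and> H \<in> grid r s \<and> le_v K H \<and> (le_v v K \<or> \<not> le_v v H)}"

definition is_source :: "vtx rel \<Rightarrow> vtx \<Rightarrow> bool" where
  "is_source T v \<longleftrightarrow> (\<forall>u. (u,v) \<in> T \<longrightarrow> u = v)"

lemma meet_v_in_grid: "x \<in> grid r s \<Longrightarrow> z \<in> grid r s \<Longrightarrow> meet_v x z \<in> grid r s"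
  by (auto simp: grid_def meet_v_def)

lemma transfer_system_upset_blocking_ts: "transfer_system r s (upset_blocking_ts r s v)"
  unfolding transfer_system_def
proof (intro conjI)
  show "trans (upset_blocking_ts r s v)"
    by (auto simp: trans_def upset_blocking_ts_def le_v_def)
  show "\<forall>(x, y)\<in>upset_blocking_ts r s v. \<forall>z\<in>grid r s.
          (meet_v x z, meet_v y z) \<in> upset_blocking_ts r s v"
    by (auto simp: upset_blocking_ts_def grid_def le_v_def meet_v_def)
qed (auto simp: upset_blocking_ts_def le_v_def)

lemma saturated_upset_blocking_ts: "saturated r s (upset_blocking_ts r s v)"
  by (auto simp: saturated_def upset_blocking_ts_def le_v_def)

lemma bottom_transfer_in_upset_blocking_ts_iff:
  assumes "w \<in> grid r s"
  shows "((0,0), w) \<in> upset_blocking_ts r s v \<longleftrightarrow> v = (0,0) \<or> \<not> le_v v w"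
  using assms by (cases v) (auto simp: upset_blocking_ts_def grid_def le_v_def)

lemma upset_blocking_ts_ne_complete_ts:
  assumes "v \<in> grid r s" "v \<noteq> (0,0)"
  shows "upset_blocking_ts r s v \<noteq> complete_ts r s"
proof -
  have "((0,0), v) \<in> complete_ts r s"
    using assms(1) by (auto simp: complete_ts_def grid_def le_v_def)
  moreover have "((0,0), v) \<notin> upset_blocking_ts r s v"
    using assms bottom_transfer_in_upset_blocking_ts_iff by (auto simp: le_v_def)
  ultimately show ?thesis by blast
qed

lemma upset_blocking_ts_inject:
  assumes "v \<in> grid r s" "w \<in> grid r s" "v \<noteq> (0,0)" "w \<noteq> (0,0)"
    and "upset_blocking_ts r s v = upset_blocking_ts r s w"
  shows "v = w"
proof -
  have "le_v v v" "le_v w w" by (simp_all add: le_v_def)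
  then have "((0,0), v) \<notin> upset_blocking_ts r s w" "((0,0), w) \<notin> upset_blocking_ts r s v"
    using assms bottom_transfer_in_upset_blocking_ts_iff[OF assms(1), of v]
      bottom_transfer_in_upset_blocking_ts_iff[OF assms(2), of w] by auto
  then have "le_v w v" "le_v v w"
    using bottom_transfer_in_upset_blocking_ts_iff[OF assms(1), of w]
      bottom_transfer_in_upset_blocking_ts_iff[OF assms(2), of v] by simp_all
  then show ?thesis by (cases v, cases w) (auto simp: le_v_def)
qed

lemma saturated_imp_compatible:
  assumes "transfer_system r s S" "saturated r s S" "T \<subseteq> S"
  shows "compatible r s T S"
  unfolding compatible_def
proof (intro conjI ballI impI)
  show "T \<subseteq> S" by fact
  fix A B C assume grid: "A \<in> grid r s" "B \<in> grid r s" "C \<in> grid r s"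
    and hyps: "le_v B A \<and> le_v C A \<and> (B, A) \<in> T \<and> (meet_v B C, B) \<in> S"
  have "trans S" using assms(1) by (simp add: transfer_system_def)
  then have "(meet_v B C, A) \<in> S" using hyps assms(3) by (meson subsetD transD)
  moreover have "le_v (meet_v B C) C" by (simp add: le_v_def meet_v_def)
  ultimately show "(C, A) \<in> S"
    using assms(2) grid hyps meet_v_in_grid unfolding saturated_def by blast
qed

lemma subset_upset_blocking_ts:
  assumes ts: "transfer_system r s T" and "v \<in> grid r s" and "is_source T v"
  shows "T \<subseteq> upset_blocking_ts r s v"
proof safe
  fix K H assume KH: "(K,H) \<in> T"
  then have "K \<in> grid r s" "H \<in> grid r s" "le_v K H"
    using ts unfolding transfer_system_def by auto
  moreover have "le_v v K" if "le_v v H"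
  proof -
    have "(meet_v K v, meet_v H v) \<in> T"
      using ts KH \<open>v \<in> grid r s\<close> unfolding transfer_system_def by auto
    moreover have "meet_v H v = v"
      using that by (cases v, cases H) (auto simp: meet_v_def le_v_def)
    ultimately have "meet_v K v = v" using \<open>is_source T v\<close> by (metis is_source_def)
    then show ?thesis by (cases v, cases K) (auto simp: meet_v_def le_v_def min_def split: if_splits)
  qed
  ultimately show "(K,H) \<in> upset_blocking_ts r s v" by (auto simp: upset_blocking_ts_def)
qed

lemma upset_blocking_ts_eq_Hull:
  assumes "lesser_simply_paired r s T" "transfer_system r s T"
    and "v \<in> grid r s" "v \<noteq> (0,0)" "is_source T v"
  shows "upset_blocking_ts r s v = Hull r s T"
proof -
  have sub: "T \<subseteq> upset_blocking_ts r s v"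
    using subset_upset_blocking_ts assms(2-5) by blast
  then have "compatible r s T (upset_blocking_ts r s v)"
    by (simp add: saturated_imp_compatible transfer_system_upset_blocking_ts
        saturated_upset_blocking_ts)
  with assms(1) sub show ?thesis
    using transfer_system_upset_blocking_ts upset_blocking_ts_ne_complete_ts[OF assms(3,4)]
    unfolding lesser_simply_paired_def by blast
qed

lemma equiv_undirected_reachability: "equiv UNIV ((T \<union> T\<inverse>)\<^sup>*)"
  by (simp add: equivI refl_rtrancl sym_rtrancl sym_Un_converse trans_rtrancl)

lemma pairwise_disjnt_components: "pairwise disjnt (components r s T)"
proof -
  have "components r s T \<subseteq> UNIV // (T \<union> T\<inverse>)\<^sup>*"
    by (auto simp: components_def quotient_def)
  then show ?thesis
    using quotient_disj[OF equiv_undirected_reachability]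
    unfolding pairwise_def disjnt_def by blast
qed

lemma component_subset_grid:
  assumes "transfer_system r s T" "X \<in> components r s T"
  shows "X \<subseteq> grid r s"
proof
  fix x assume "x \<in> X"
  then obtain a where "a \<in> grid r s" and reach: "(a,x) \<in> (T \<union> T\<inverse>)\<^sup>*"
    using assms(2) unfolding components_def quotient_def by blast
  from reach \<open>a \<in> grid r s\<close> show "x \<in> grid r s"
  proof (induction rule: rtrancl_induct)
    case (step y z)
    then show ?case using assms(1) by (auto simp: transfer_system_def)
  qed
qed

lemma component_has_source:
  assumes ts: "transfer_system r s T" and X: "X \<in> components r s T"
  shows "\<exists>v\<in>X. is_source T v"
proof -
  let ?R = "(T \<union> T\<inverse>)\<^sup>*"
  obtain a where a: "a \<in> grid r s" "X = ?R `` {a}"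
    using X unfolding components_def quotient_def by blast
  then have "a \<in> X" by blast
  then obtain v where v: "v \<in> X" and least: "\<And>y. y \<in> X \<Longrightarrow> fst v + snd v \<le> fst y + snd y"
    using ex_has_least_nat[of "\<lambda>x. x \<in> X" a "\<lambda>x. fst x + snd x"] by blast
  have "u = v" if "(u,v) \<in> T" for u
  proof -
    from that have "(v,u) \<in> ?R" by blast
    with v a have "u \<in> X" by (blast intro: rtrancl_trans)
    moreover have "le_v u v" using ts that unfolding transfer_system_def by auto
    ultimately show "u = v" using least[of u] by (cases u, cases v) (auto simp: le_v_def)
  qed
  with v show ?thesis unfolding is_source_def by blast
qed

lemma two_members_avoiding:
  fixes \<C> :: "'a set set"
  assumes "card \<C> \<ge> 3" "pairwise disjnt \<C>"
  obtains X Y where "X \<in> \<C>" "Y \<in> \<C>" "X \<noteq> Y" "b \<notin> X" "b \<notin> Y"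
proof -
  let ?B = "{X \<in> \<C>. b \<in> X}"
  have "finite \<C>" using assms(1) card_ge_0_finite[of \<C>] by simp
  then have "finite ?B" by simp
  moreover have "X = Y" if "X \<in> ?B" "Y \<in> ?B" for X Y
    using that assms(2) unfolding pairwise_def disjnt_def by blast
  ultimately have "card ?B \<le> 1" using card_le_Suc0_iff_eq[of ?B] by auto
  then have "\<not> card (\<C> - ?B) \<le> Suc 0"
    using assms(1) diff_card_le_card_Diff[OF \<open>finite ?B\<close>, of \<C>] by linarith
  then obtain X Y where "X \<in> \<C> - ?B" "Y \<in> \<C> - ?B" "X \<noteq> Y"
    using card_le_Suc0_iff_eq \<open>finite \<C>\<close> by blast
  with that show ?thesis by blast
qed

theorem mainTheorem12:
  fixes p q r s :: nat and T :: "vtx rel"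
  assumes "prime p" and "prime q" and "p \<noteq> q"
    and "transfer_system r s T"
    and "card (components r s T) \<ge> 3"
  shows "\<not> lesser_simply_paired r s T"
proof
  assume lsp: "lesser_simply_paired r s T"
  note ts = assms(4)
  obtain X Y where XY: "X \<in> components r s T" "Y \<in> components r s T" "X \<noteq> Y"
    "(0,0) \<notin> X" "(0,0) \<notin> Y"
    using two_members_avoiding[OF assms(5) pairwise_disjnt_components] by metis
  obtain v w where v: "v \<in> X" "is_source T v" and w: "w \<in> Y" "is_source T w"
    using component_has_source[OF ts] XY(1,2) by metis
  have grid: "v \<in> grid r s" "w \<in> grid r s"
    using component_subset_grid[OF ts] XY(1,2) v w by blast+
  have "v \<noteq> (0,0)" "w \<noteq> (0,0)" using XY v w by auto
  then have "upset_blocking_ts r s v = upset_blocking_ts r s w"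
    using upset_blocking_ts_eq_Hull[OF lsp ts] grid v w by simp
  then have "v = w"
    using upset_blocking_ts_inject grid \<open>v \<noteq> (0,0)\<close> \<open>w \<noteq> (0,0)\<close> by blast
  with pairwise_disjnt_components XY(1-3) v w show False
    unfolding pairwise_def disjnt_def by blast
qed

end
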